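(* Let $\alpha, \beta_1, \beta_2 > 0$ and let $U_1, U_2, V_1, V_2$ be random variables with $U_1, U_2$ independent and $V_1, V_2$ independent. If $V_i \preceq_{(\alpha, \beta_i)} U_i$ for $i \in \{1,2\}$, then \[ \ln\!\big(e^{V_1} + e^{V_2}\big) \preceq_{(\alpha,\, \beta_1+\beta_2)} \ln\!\big(e^{U_1} + e^{U_2}\big). \]
   Context: For a random variable $X$ (possibly taking values $\pm\infty$) let $\bar{F}_X(x) = 1 - F_X(x)$ be its complementary CDF. Given $\alpha \ge 0$, $\beta \in [0,1]$, we write $V \preceq_{(\alpha,\beta)} U$ if $\bar{F}_V(x) \le \bar{F}_U(x-\alpha) + \beta$ for all $x \in [-\infty,\infty]$. *)

theory Defs
  imports "HOL-Probability.Probability"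
begin

definition exp_e :: "ereal \<Rightarrow> ereal" where
  "exp_e x = (case x of ereal r \<Rightarrow> ereal (exp r) | PInfty \<Rightarrow> \<infinity> | MInfty \<Rightarrow> 0)"

definition ln_e :: "ereal \<Rightarrow> ereal" where
  "ln_e y = (if y \<le> 0 then -\<infinity> else if y = \<infinity> then \<infinity> else ereal (ln (real_of_ereal y)))"

definition ccdf :: "'a measure \<Rightarrow> ('a \<Rightarrow> ereal) \<Rightarrow> ereal \<Rightarrow> real" where
  "ccdf M X x = 1 - measure M {\<omega> \<in> space M. X \<omega> \<le> x}"

definition stoch_le :: "'b measure \<Rightarrow> ('b \<Rightarrow> ereal) \<Rightarrow> 'a measure \<Rightarrow> ('a \<Rightarrow> ereal)
    \<Rightarrow> real \<Rightarrow> real \<Rightarrow> bool" where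
  "stoch_le N V M U \<alpha> \<beta> \<longleftrightarrow> (\<forall>x::ereal. ccdf N V x \<le> ccdf M U (x - ereal \<alpha>) + \<beta>)"

end

theory Submission
  imports Defs "HOL-Library.Product_Order"
begin

text \<open>Let \<open>\<mu>\<^sub>i\<close> be the law of \<open>V\<^sub>i\<close> and \<open>\<nu>\<^sub>i\<close> the law of \<open>U\<^sub>i + \<alpha>\<close>. The hypothesis says that
  \<open>\<mu>\<^sub>i(S) \<le> \<nu>\<^sub>i(S) + \<beta>\<^sub>i\<close> for every ray \<open>S = (x, \<infinity>]\<close>; by continuity from above this extends to
  the closed rays and hence to all upward closed subsets of \<open>[-\<infinity>, \<infinity>]\<close>. The map
  \<open>g(a, b) = ln (e\<^sup>a + e\<^sup>b)\<close> is monotone and commutes with adding \<open>\<alpha>\<close> to both arguments, so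
  by independence the two sides of the claim are the masses of the upward closed set \<open>{g > x}\<close>
  under \<open>\<mu>\<^sub>1 \<otimes> \<mu>\<^sub>2\<close> and \<open>\<nu>\<^sub>1 \<otimes> \<nu>\<^sub>2\<close>. Integrating out one coordinate at a time, replacing
  \<open>\<mu>\<^sub>1\<close> by \<open>\<nu>\<^sub>1\<close> costs at most \<open>\<beta>\<^sub>1\<close>, and then replacing \<open>\<mu>\<^sub>2\<close> by \<open>\<nu>\<^sub>2\<close> at most \<open>\<beta>\<^sub>2\<close>.\<close>

definition upclosed :: "'a::order set \<Rightarrow> bool" where
  "upclosed S \<longleftrightarrow> (\<forall>a b. a \<in> S \<longrightarrow> a \<le> b \<longrightarrow> b \<in> S)"

lemma upclosedI: "(\<And>a b. a \<in> S \<Longrightarrow> a \<le> b \<Longrightarrow> b \<in> S) \<Longrightarrow> upclosed S"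
  by (auto simp: upclosed_def)

lemma upclosedD: "upclosed S \<Longrightarrow> a \<in> S \<Longrightarrow> a \<le> b \<Longrightarrow> b \<in> S"
  by (auto simp: upclosed_def)

lemma upclosed_fst_section: "upclosed A \<Longrightarrow> upclosed {a. (a, c) \<in> A}"
  by (auto intro!: upclosedI elim: upclosedD)

lemma upclosed_snd_section: "upclosed A \<Longrightarrow> upclosed {b. (c, b) \<in> A}"
  by (auto intro!: upclosedI elim: upclosedD)

lemma upclosed_greater_mono: "mono f \<Longrightarrow> upclosed {x. y < f x}"
  by (auto intro!: upclosedI dest: monoD intro: less_le_trans)

lemma upclosed_cases:
  fixes S :: "'a::complete_linorder set"
  assumes "upclosed S"
  obtains t where "S = {t..}" | t where "S = {t<..}"
proof (cases "Inf S \<in> S")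
  case True
  then have "S = {Inf S..}"
    using assms by (auto intro: Inf_lower elim: upclosedD)
  then show ?thesis ..
next
  case False
  have "S = {Inf S<..}"
  proof safe
    fix b assume "b \<in> S"
    with False show "Inf S < b"
      by (metis Inf_lower order.not_eq_order_implies_strict)
  next
    fix b assume "Inf S < b"
    then obtain s where "s \<in> S" "s < b"
      by (auto simp: Inf_less_iff)
    then show "b \<in> S"
      using assms by (auto elim: upclosedD)
  qed
  then show ?thesis ..
qed

lemma borel_measurable_mono_complete_linorder:
  fixes f :: "'a::{complete_linorder, linorder_topology} \<Rightarrow> 'b::{linorder_topology, second_countable_topology}"
  assumes "mono f"
  shows "f \<in> borel_measurable borel"
proof (rule borel_measurableI_greater)
  fix y
  from assms have "upclosed {x. y < f x}"
    by (rule upclosed_greater_mono)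
  then have "{x. y < f x} \<in> sets borel"
    by (cases rule: upclosed_cases) (metis borel_closed closed_atLeast, metis borel_open open_greaterThan)
  then show "{x \<in> space borel. y < f x} \<in> sets borel"
    by simp
qed

lemma mono_exp_e: "mono exp_e"
  by (rule monoI) (auto simp: exp_e_def split: ereal.split)

lemma exp_e_nonneg: "0 \<le> exp_e a"
  by (cases a) (auto simp: exp_e_def)

lemma mono_ln_e: "mono ln_e"
proof (rule monoI)
  fix a b :: ereal
  assume "a \<le> b"
  then show "ln_e a \<le> ln_e b"
    by (cases a; cases b) (auto simp: ln_e_def)
qed

lemma borel_measurable_exp_e [measurable]: "exp_e \<in> borel_measurable borel"
  by (rule borel_measurable_mono_complete_linorder[OF mono_exp_e])

lemma borel_measurable_ln_e [measurable]: "ln_e \<in> borel_measurable borel"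
  by (rule borel_measurable_mono_complete_linorder[OF mono_ln_e])

lemma mono_ln_e_sum_exp_e: "mono (\<lambda>(a, b). ln_e (exp_e a + exp_e b))"
  by (auto intro!: monoI monoD[OF mono_ln_e] add_mono monoD[OF mono_exp_e])

lemma exp_e_add_real: "exp_e (a + ereal c) = exp_e a * ereal (exp c)"
  by (cases a) (auto simp: exp_e_def exp_add)

lemma ln_e_mult_exp: "0 \<le> y \<Longrightarrow> ln_e (y * ereal (exp c)) = ln_e y + ereal c"
  by (cases y) (auto simp: ln_e_def ln_mult zero_less_mult_iff mult_le_0_iff)

lemma ln_e_sum_exp_e_add_real:
  "ln_e (exp_e (a + ereal c) + exp_e (b + ereal c)) = ln_e (exp_e a + exp_e b) + ereal c"
proof -
  have "exp_e (a + ereal c) + exp_e (b + ereal c) = (exp_e a + exp_e b) * ereal (exp c)"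
    using exp_e_nonneg[of a] exp_e_nonneg[of b]
    by (simp add: exp_e_add_real ereal_distrib ereal_right_distrib)
  then show ?thesis
    using exp_e_nonneg[of a] exp_e_nonneg[of b] by (simp add: ln_e_mult_exp)
qed

definition tail_le :: "ereal measure \<Rightarrow> ereal measure \<Rightarrow> real \<Rightarrow> bool" where
  "tail_le \<mu> \<nu> \<beta> \<longleftrightarrow> (\<forall>x. measure \<mu> {x<..} \<le> measure \<nu> {x<..} + \<beta>)"

lemma tail_le_atLeast:
  assumes "\<mu> \<in> space (prob_algebra borel)" "\<nu> \<in> space (prob_algebra borel)"
    and "tail_le \<mu> \<nu> \<beta>" and "t \<noteq> -\<infinity>"
  shows "measure \<mu> {t..} \<le> measure \<nu> {t..} + \<beta>"
proof -
  interpret \<mu>: prob_space \<mu> using assms(1) by (simp add: space_prob_algebra)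
  interpret \<nu>: prob_space \<nu> using assms(2) by (simp add: space_prob_algebra)
  have sets: "sets \<mu> = sets borel" "sets \<nu> = sets borel"
    using assms(1,2) by (simp_all add: space_prob_algebra)
  obtain s where "incseq s" and below: "\<And>n. s n < t" and "s \<longlonglongrightarrow> t"
    using countable_approach[OF \<open>t \<noteq> -\<infinity>\<close>] by blast
  have rays: "(\<Inter>n. {s n<..}) = {t..}"
  proof safe
    fix b assume "b \<in> (\<Inter>n. {s n<..})"
    then show "t \<le> b"
      by (intro LIMSEQ_le_const2[OF \<open>s \<longlonglongrightarrow> t\<close>]) (auto intro: less_imp_le)
  qed (use below in \<open>auto intro: less_le_trans\<close>)
  have "decseq (\<lambda>n. {s n<..})"
    using \<open>incseq s\<close> by (auto simp: incseq_def decseq_def intro: le_less_trans)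
  then have lim: "(\<lambda>n. measure \<nu> {s n<..}) \<longlonglongrightarrow> measure \<nu> {t..}"
    unfolding rays[symmetric] by (intro \<nu>.finite_Lim_measure_decseq) (auto simp: sets)
  have "measure \<mu> {t..} - \<beta> \<le> measure \<nu> {s n<..}" for n
  proof -
    have "measure \<mu> {t..} \<le> measure \<mu> {s n<..}"
      using below[of n] by (intro \<mu>.finite_measure_mono) (auto simp: sets intro: less_le_trans)
    moreover have "measure \<mu> {s n<..} \<le> measure \<nu> {s n<..} + \<beta>"
      using assms(3) by (simp add: tail_le_def)
    ultimately show ?thesis
      by linarith
  qed
  then have "measure \<mu> {t..} - \<beta> \<le> measure \<nu> {t..}"
    by (intro LIMSEQ_le_const[OF lim]) blast
  then show ?thesis
    by linarith
qed

lemma tail_le_upclosed: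
  assumes "\<mu> \<in> space (prob_algebra borel)" "\<nu> \<in> space (prob_algebra borel)"
    and "tail_le \<mu> \<nu> \<beta>" and "0 \<le> \<beta>" and "upclosed S"
  shows "emeasure \<mu> S \<le> emeasure \<nu> S + ennreal \<beta>"
proof -
  interpret \<mu>: prob_space \<mu> using assms(1) by (simp add: space_prob_algebra)
  interpret \<nu>: prob_space \<nu> using assms(2) by (simp add: space_prob_algebra)
  have sets: "sets \<mu> = sets borel" "sets \<nu> = sets borel"
    using assms(1,2) by (simp_all add: space_prob_algebra)
  have "measure \<mu> S \<le> measure \<nu> S + \<beta>"
    using assms(5)
  proof (cases rule: upclosed_cases)
    case (1 t)
    show ?thesis
    proof (cases "t = -\<infinity>")
      case True
      have "space \<mu> = UNIV" "space \<nu> = UNIV"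
        using sets by (metis sets_eq_imp_space_eq space_borel)+
      moreover have "S = UNIV"
        using 1 True by auto
      ultimately show ?thesis
        using \<mu>.prob_space \<nu>.prob_space \<open>0 \<le> \<beta>\<close> by simp
    next
      case False
      then show ?thesis
        using 1 tail_le_atLeast[OF assms(1-3)] by simp
    qed
  next
    case (2 t)
    then show ?thesis
      using assms(3) unfolding tail_le_def by simp
  qed
  then show ?thesis
    using \<open>0 \<le> \<beta>\<close> by (simp add: \<mu>.emeasure_eq_measure \<nu>.emeasure_eq_measure flip: ennreal_plus)
qed

lemma tail_le_pair_fst:
  fixes \<rho> :: "'c::order measure"
  assumes "\<mu> \<in> space (prob_algebra borel)" "\<nu> \<in> space (prob_algebra borel)" "prob_space \<rho>"
    and "tail_le \<mu> \<nu> \<beta>" and "0 \<le> \<beta>"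
    and A: "A \<in> sets (borel \<Otimes>\<^sub>M \<rho>)" "upclosed A"
  shows "emeasure (\<mu> \<Otimes>\<^sub>M \<rho>) A \<le> emeasure (\<nu> \<Otimes>\<^sub>M \<rho>) A + ennreal \<beta>"
proof -
  interpret \<rho>: prob_space \<rho> by fact
  interpret \<mu>\<rho>: pair_sigma_finite \<mu> \<rho>
    using assms(1) by (intro pair_sigma_finite.intro \<rho>.sigma_finite_measure_axioms
        prob_space_imp_sigma_finite) (simp add: space_prob_algebra)
  interpret \<nu>\<rho>: pair_sigma_finite \<nu> \<rho>
    using assms(2) by (intro pair_sigma_finite.intro \<rho>.sigma_finite_measure_axioms
        prob_space_imp_sigma_finite) (simp add: space_prob_algebra)
  have "A \<in> sets (\<mu> \<Otimes>\<^sub>M \<rho>)" "A \<in> sets (\<nu> \<Otimes>\<^sub>M \<rho>)"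
    using A(1) assms(1,2) by (simp_all add: space_prob_algebra cong: sets_pair_measure_cong)
  note sets = this
  have "emeasure (\<mu> \<Otimes>\<^sub>M \<rho>) A = (\<integral>\<^sup>+c. emeasure \<mu> {a. (a, c) \<in> A} \<partial>\<rho>)"
    using \<mu>\<rho>.emeasure_pair_measure_alt2[OF sets(1)] by (simp add: vimage_def)
  also have "\<dots> \<le> (\<integral>\<^sup>+c. emeasure \<nu> {a. (a, c) \<in> A} + ennreal \<beta> \<partial>\<rho>)"
    by (intro nn_integral_mono tail_le_upclosed[OF assms(1,2,4,5)] upclosed_fst_section[OF A(2)])
  also have "\<dots> = (\<integral>\<^sup>+c. emeasure \<nu> {a. (a, c) \<in> A} \<partial>\<rho>) + ennreal \<beta>"
    using \<nu>\<rho>.measurable_emeasure_Pair2[OF sets(2)]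
    by (simp add: vimage_def nn_integral_add \<rho>.emeasure_space_1)
  also have "\<dots> = emeasure (\<nu> \<Otimes>\<^sub>M \<rho>) A + ennreal \<beta>"
    using \<nu>\<rho>.emeasure_pair_measure_alt2[OF sets(2)] by (simp add: vimage_def)
  finally show ?thesis .
qed

lemma tail_le_pair_snd:
  fixes \<rho> :: "'c::order measure"
  assumes "\<mu> \<in> space (prob_algebra borel)" "\<nu> \<in> space (prob_algebra borel)" "prob_space \<rho>"
    and "tail_le \<mu> \<nu> \<beta>" and "0 \<le> \<beta>"
    and A: "A \<in> sets (\<rho> \<Otimes>\<^sub>M borel)" "upclosed A"
  shows "emeasure (\<rho> \<Otimes>\<^sub>M \<mu>) A \<le> emeasure (\<rho> \<Otimes>\<^sub>M \<nu>) A + ennreal \<beta>"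
proof -
  interpret \<rho>: prob_space \<rho> by fact
  interpret \<mu>: prob_space \<mu> using assms(1) by (simp add: space_prob_algebra)
  interpret \<nu>: prob_space \<nu> using assms(2) by (simp add: space_prob_algebra)
  have "A \<in> sets (\<rho> \<Otimes>\<^sub>M \<mu>)" "A \<in> sets (\<rho> \<Otimes>\<^sub>M \<nu>)"
    using A(1) assms(1,2) by (simp_all add: space_prob_algebra cong: sets_pair_measure_cong)
  note sets = this
  have "emeasure (\<rho> \<Otimes>\<^sub>M \<mu>) A = (\<integral>\<^sup>+c. emeasure \<mu> {b. (c, b) \<in> A} \<partial>\<rho>)"
    using \<mu>.emeasure_pair_measure_alt[OF sets(1)] by (simp add: vimage_def)
  also have "\<dots> \<le> (\<integral>\<^sup>+c. emeasure \<nu> {b. (c, b) \<in> A} + ennreal \<beta> \<partial>\<rho>)"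
    by (intro nn_integral_mono tail_le_upclosed[OF assms(1,2,4,5)] upclosed_snd_section[OF A(2)])
  also have "\<dots> = (\<integral>\<^sup>+c. emeasure \<nu> {b. (c, b) \<in> A} \<partial>\<rho>) + ennreal \<beta>"
    using \<nu>.measurable_emeasure_Pair[OF sets(2)]
    by (simp add: vimage_def nn_integral_add \<rho>.emeasure_space_1)
  also have "\<dots> = emeasure (\<rho> \<Otimes>\<^sub>M \<nu>) A + ennreal \<beta>"
    using \<nu>.emeasure_pair_measure_alt[OF sets(2)] by (simp add: vimage_def)
  finally show ?thesis .
qed

lemma tail_le_pair:
  fixes \<mu>1 \<mu>2 \<nu>1 \<nu>2 :: "ereal measure"
  assumes laws: "\<mu>1 \<in> space (prob_algebra borel)" "\<mu>2 \<in> space (prob_algebra borel)"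
      "\<nu>1 \<in> space (prob_algebra borel)" "\<nu>2 \<in> space (prob_algebra borel)"
    and tails: "tail_le \<mu>1 \<nu>1 \<beta>1" "tail_le \<mu>2 \<nu>2 \<beta>2" "0 \<le> \<beta>1" "0 \<le> \<beta>2"
    and A: "A \<in> sets (borel \<Otimes>\<^sub>M borel)" "upclosed A"
  shows "measure (\<mu>1 \<Otimes>\<^sub>M \<mu>2) A \<le> measure (\<nu>1 \<Otimes>\<^sub>M \<nu>2) A + (\<beta>1 + \<beta>2)"
proof -
  have prob: "prob_space \<mu>1" "prob_space \<mu>2" "prob_space \<nu>1" "prob_space \<nu>2"
    and sets: "sets \<mu>2 = sets borel" "sets \<nu>1 = sets borel"
    using laws by (simp_all add: space_prob_algebra)
  interpret \<mu>: prob_space "\<mu>1 \<Otimes>\<^sub>M \<mu>2"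
    by (rule prob_space_pair[OF prob(1,2)])
  interpret \<nu>: prob_space "\<nu>1 \<Otimes>\<^sub>M \<nu>2"
    by (rule prob_space_pair[OF prob(3,4)])
  have "emeasure (\<mu>1 \<Otimes>\<^sub>M \<mu>2) A \<le> emeasure (\<nu>1 \<Otimes>\<^sub>M \<mu>2) A + ennreal \<beta>1"
    using A(1) sets(1)
    by (intro tail_le_pair_fst[OF laws(1,3) prob(2) tails(1,3) _ A(2)])
      (simp cong: sets_pair_measure_cong)
  moreover have "emeasure (\<nu>1 \<Otimes>\<^sub>M \<mu>2) A \<le> emeasure (\<nu>1 \<Otimes>\<^sub>M \<nu>2) A + ennreal \<beta>2"
    using A(1) sets(2)
    by (intro tail_le_pair_snd[OF laws(2,4) prob(3) tails(2,4) _ A(2)])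
      (simp cong: sets_pair_measure_cong)
  ultimately have "emeasure (\<mu>1 \<Otimes>\<^sub>M \<mu>2) A \<le> emeasure (\<nu>1 \<Otimes>\<^sub>M \<nu>2) A + ennreal \<beta>2 + ennreal \<beta>1"
    by (meson add_right_mono order_trans)
  then show ?thesis
    using tails(3,4) by (simp add: \<mu>.emeasure_eq_measure \<nu>.emeasure_eq_measure flip: ennreal_plus)
qed

lemma ccdf_eq_measure_greater:
  assumes "prob_space M" "X \<in> borel_measurable M"
  shows "ccdf M X x = measure M {\<omega> \<in> space M. x < X \<omega>}"
proof -
  interpret prob_space M by fact
  have "{\<omega> \<in> space M. X \<omega> \<le> x} \<in> events"
    using assms(2) by measurable
  moreover have "{\<omega> \<in> space M. x < X \<omega>} = space M - {\<omega> \<in> space M. X \<omega> \<le> x}"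
    by auto
  ultimately show ?thesis
    by (simp add: ccdf_def prob_compl)
qed

lemma ccdf_eq_measure_distr:
  "prob_space M \<Longrightarrow> X \<in> borel_measurable M \<Longrightarrow> ccdf M X x = measure (distr M borel X) {x<..}"
  by (simp add: ccdf_eq_measure_greater measure_distr vimage_def Int_def conj_commute)

lemma ccdf_add_real: "ccdf M (\<lambda>\<omega>. X \<omega> + ereal c) x = ccdf M X (x - ereal c)"
proof -
  have "X \<omega> + ereal c \<le> x \<longleftrightarrow> X \<omega> \<le> x - ereal c" for \<omega>
    by (cases "X \<omega>"; cases x) auto
  then show ?thesis
    by (simp add: ccdf_def)
qed

lemma stoch_le_iff_tail_le:
  assumes "prob_space M" "prob_space N" "U \<in> borel_measurable M" "V \<in> borel_measurable N"
  shows "stoch_le N V M U \<alpha> \<beta> \<longleftrightarrow> tail_le (distr N borel V) (distr M borel (\<lambda>\<omega>. U \<omega> + ereal \<alpha>)) \<beta>"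
proof -
  have "(\<lambda>\<omega>. U \<omega> + ereal \<alpha>) \<in> borel_measurable M"
    using assms(3) by measurable
  then show ?thesis
    using assms by (simp add: stoch_le_def tail_le_def ccdf_add_real flip: ccdf_eq_measure_distr)
qed

lemma ccdf_indep_pair:
  fixes X Y :: "'a \<Rightarrow> 'b::topological_space"
  assumes "prob_space M" "prob_space.indep_var M borel X borel Y"
    and g: "case_prod g \<in> borel_measurable (borel \<Otimes>\<^sub>M borel)"
  shows "ccdf M (\<lambda>\<omega>. g (X \<omega>) (Y \<omega>)) x
    = measure (distr M borel X \<Otimes>\<^sub>M distr M borel Y) {p. x < case_prod g p}"
proof -
  interpret prob_space M by fact
  have rv: "X \<in> borel_measurable M" "Y \<in> borel_measurable M"
    and joint: "distr M borel X \<Otimes>\<^sub>M distr M borel Y = distr M (borel \<Otimes>\<^sub>M borel) (\<lambda>\<omega>. (X \<omega>, Y \<omega>))"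
    using assms(2) unfolding indep_var_distribution_eq by auto
  have "ccdf M (\<lambda>\<omega>. g (X \<omega>) (Y \<omega>)) x = measure M {\<omega> \<in> space M. x < g (X \<omega>) (Y \<omega>)}"
    using measurable_compose[OF measurable_Pair[OF rv] g] by (simp add: ccdf_eq_measure_greater[OF assms(1)])
  also have "\<dots> = measure M ((\<lambda>\<omega>. (X \<omega>, Y \<omega>)) -` {p. x < case_prod g p} \<inter> space M)"
    by (rule arg_cong[where f = "measure M"]) auto
  also have "\<dots> = measure (distr M (borel \<Otimes>\<^sub>M borel) (\<lambda>\<omega>. (X \<omega>, Y \<omega>))) {p. x < case_prod g p}"
    using measurable_sets[OF g, of "{x<..}"]
    by (intro measure_distr[symmetric] measurable_Pair rv) (simp_all add: vimage_def space_pair_measure)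
  finally show ?thesis
    by (simp add: joint)
qed

theorem mainTheorem4:
  fixes M :: "'a measure" and N :: "'b measure"
    and U1 U2 :: "'a \<Rightarrow> ereal" and V1 V2 :: "'b \<Rightarrow> ereal"
    and \<alpha> \<beta>1 \<beta>2 :: real
  assumes "prob_space M" and "prob_space N"
    and "U1 \<in> borel_measurable M" and "U2 \<in> borel_measurable M"
    and "V1 \<in> borel_measurable N" and "V2 \<in> borel_measurable N"
    and "prob_space.indep_var M borel U1 borel U2"
    and "prob_space.indep_var N borel V1 borel V2"
    and "\<alpha> > 0" and "\<beta>1 > 0" and "\<beta>2 > 0"
    and "stoch_le N V1 M U1 \<alpha> \<beta>1" and "stoch_le N V2 M U2 \<alpha> \<beta>2"
  shows "stoch_le N (\<lambda>\<omega>. ln_e (exp_e (V1 \<omega>) + exp_e (V2 \<omega>)))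
                  M (\<lambda>\<omega>. ln_e (exp_e (U1 \<omega>) + exp_e (U2 \<omega>))) \<alpha> (\<beta>1 + \<beta>2)"
proof -
  let ?g = "\<lambda>a b. ln_e (exp_e a + exp_e b)"
  let ?\<mu>1 = "distr N borel V1" and ?\<mu>2 = "distr N borel V2"
  let ?\<nu>1 = "distr M borel (\<lambda>\<omega>. U1 \<omega> + ereal \<alpha>)" and ?\<nu>2 = "distr M borel (\<lambda>\<omega>. U2 \<omega> + ereal \<alpha>)"
  interpret M: prob_space M by fact
  interpret N: prob_space N by fact
  note [measurable] = assms(3-6)
  have laws: "?\<mu>1 \<in> space (prob_algebra borel)" "?\<mu>2 \<in> space (prob_algebra borel)"
    "?\<nu>1 \<in> space (prob_algebra borel)" "?\<nu>2 \<in> space (prob_algebra borel)"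
    by (auto simp: space_prob_algebra intro!: M.prob_space_distr N.prob_space_distr)
  have tails: "tail_le ?\<mu>1 ?\<nu>1 \<beta>1" "tail_le ?\<mu>2 ?\<nu>2 \<beta>2"
    using assms(12,13) stoch_le_iff_tail_le[OF assms(1,2)] by auto
  have indep: "M.indep_var borel (\<lambda>\<omega>. U1 \<omega> + ereal \<alpha>) borel (\<lambda>\<omega>. U2 \<omega> + ereal \<alpha>)"
    using M.indep_var_compose[OF assms(7), of "\<lambda>u. u + ereal \<alpha>" borel "\<lambda>u. u + ereal \<alpha>" borel]
    by (simp add: comp_def)
  have g: "case_prod ?g \<in> borel_measurable (borel \<Otimes>\<^sub>M borel)"
    by measurable
  have "ccdf N (\<lambda>\<omega>. ?g (V1 \<omega>) (V2 \<omega>)) x \<le> ccdf M (\<lambda>\<omega>. ?g (U1 \<omega>) (U2 \<omega>)) (x - ereal \<alpha>) + (\<beta>1 + \<beta>2)"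
    for x
  proof -
    let ?A = "{p. x < case_prod ?g p}"
    have A: "?A \<in> sets (borel \<Otimes>\<^sub>M borel)" "upclosed ?A"
      using measurable_sets[OF g, of "{x<..}"] upclosed_greater_mono[OF mono_ln_e_sum_exp_e]
      by (simp_all add: vimage_def space_pair_measure)
    have "ccdf N (\<lambda>\<omega>. ?g (V1 \<omega>) (V2 \<omega>)) x = measure (?\<mu>1 \<Otimes>\<^sub>M ?\<mu>2) ?A"
      by (rule ccdf_indep_pair[OF assms(2,8) g])
    also have "\<dots> \<le> measure (?\<nu>1 \<Otimes>\<^sub>M ?\<nu>2) ?A + (\<beta>1 + \<beta>2)"
      using assms(10,11) by (intro tail_le_pair[OF laws tails _ _ A]) auto
    also have "measure (?\<nu>1 \<Otimes>\<^sub>M ?\<nu>2) ?A = ccdf M (\<lambda>\<omega>. ?g (U1 \<omega> + ereal \<alpha>) (U2 \<omega> + ereal \<alpha>)) x"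
      by (rule ccdf_indep_pair[OF assms(1) indep g, symmetric])
    also have "\<dots> = ccdf M (\<lambda>\<omega>. ?g (U1 \<omega>) (U2 \<omega>)) (x - ereal \<alpha>)"
      by (simp add: ln_e_sum_exp_e_add_real ccdf_add_real)
    finally show ?thesis .
  qed
  then show ?thesis
    by (simp add: stoch_le_def)
qed

end
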